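(* Let $\mathit{VI}$ be a finite set of variables with $\#\mathit{VI}=n$ and $k\in\mathbb{N}$ with $1\le k\le n$. Then the set of meet-irreducible elements of the lattice $\mathit{TSD}_k$ is $\mathrm{MI}(\mathit{TSD}_k)=\{\mathit{SG}\}\cup\mathrm{dAtoms}(\mathit{TSD}_k)\cup M_k$, where $\mathrm{dAtoms}(\mathit{TSD}_k)=\{\mathit{SG}\setminus\{S\}\mid S\in\mathit{SG},\ \#S\le k\}$ and $M_k=\{\,\mathit{SG}\setminus\{U\in\mathit{SG}\mid T\subseteq U\subseteq S\}\mid T,S\in\mathit{SG},\ T\subsetneq S,\ \#T=k\,\}$.
   Context: $\mathit{SG}=\wp(\mathit{VI})\setminus\{\emptyset\}$, $\mathit{SH}=\wp(\mathit{SG})$. $\rho_{\mathit{TSD}_k}(sh)=\{\,S\in\mathit{SG}\mid \forall T\subseteq S:\ \#T<k\implies S=\bigcup\{U\in sh\mid T\subseteq U\subseteq S\}\,\}$ is an upper closure operator on $\mathit{SH}$ and $\mathit{TSD}_k=\rho_{\mathit{TSD}_k}(\mathit{SH})$, a complete lattice ordered by inclusion with meet given by intersection and top $\mathit{SG}$. An element $x$ of a complete lattice $C$ is meet-irreducible if for all $y,z\in C$, $x=y\wedge z$ implies $x=y$ or $x=z$; $\mathrm{MI}(C)$ is the set of such elements. A dual-atom is $x\ne\top$ such that $x\le y<\top$ implies $x=y$; $\mathrm{dAtoms}(C)$ is the set of dual-atoms. *)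

theory Defs
  imports Main
begin

definition SG :: "'a set \<Rightarrow> 'a set set" where
  "SG VI = Pow VI - {{}}"

definition SH :: "'a set \<Rightarrow> 'a set set set" where
  "SH VI = Pow (SG VI)"

definition rho_TSD :: "nat \<Rightarrow> 'a set \<Rightarrow> 'a set set \<Rightarrow> 'a set set" where
  "rho_TSD k VI sh = {S \<in> SG VI. \<forall>T. T \<subseteq> S \<longrightarrow> card T < k \<longrightarrow>
       S = \<Union>{U \<in> sh. T \<subseteq> U \<and> U \<subseteq> S}}"

definition TSD :: "nat \<Rightarrow> 'a set \<Rightarrow> 'a set set set" where
  "TSD k VI = rho_TSD k VI ` SH VI"

definition MI :: "'b set set \<Rightarrow> 'b set set" where
  "MI C = {x \<in> C. \<forall>y\<in>C. \<forall>z\<in>C. x = y \<inter> z \<longrightarrow> x = y \<or> x = z}"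

definition dAtoms :: "'b set set \<Rightarrow> 'b set \<Rightarrow> 'b set set" where
  "dAtoms C tp = {x \<in> C. x \<noteq> tp \<and> (\<forall>y\<in>C. x \<subseteq> y \<and> y \<noteq> tp \<longrightarrow> x = y)}"

definition Mk :: "nat \<Rightarrow> 'a set \<Rightarrow> 'a set set set" where
  "Mk k VI = {SG VI - {U \<in> SG VI. T \<subseteq> U \<and> U \<subseteq> S} | T S.
       T \<in> SG VI \<and> S \<in> SG VI \<and> T \<subset> S \<and> card T = k}"

end

theory Submission imports Defs begin

text \<open>A family \<open>x \<subseteq> SG\<close> lies in \<open>TSD\<^sub>k\<close> iff every \<open>S \<in> SG - x\<close> is separated from \<open>x\<close> by
  some nonempty \<open>T \<subseteq> S\<close> with \<open>#T \<le> k\<close>: no member of \<open>x\<close> lies in the interval \<open>[T, S]\<close>.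
  So \<open>TSD\<^sub>k\<close> is closed under intersection and contains every \<open>SG - [T, S]\<close>; enlarging \<open>T\<close> to
  size \<open>k\<close> (or taking \<open>T = S\<close> when \<open>#S \<le> k\<close>) shrinks the interval, so each element is the
  intersection of the dual atoms \<open>SG - {S}\<close> and members of \<open>M\<^sub>k\<close> above it, and a meet-irreducible
  element that is the meet of finitely many elements is one of them.
  Conversely, a closed \<open>y\<close> strictly above \<open>SG - [T, S]\<close> with \<open>#T = k\<close> must contain \<open>S\<close>: a
  set separating \<open>S\<close> from \<open>y\<close> either contains \<open>T\<close>, hence equals it by cardinality although
  \<open>y\<close> meets \<open>[T, S]\<close>, or lies outside \<open>[T, S]\<close> and hence in \<open>y\<close>. So two such \<open>y\<close> cannot
  meet in \<open>SG - [T, S]\<close>.\<close>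

section \<open>Meet-irreducible elements of intersection-closed families\<close>

lemma Inter_mem_if_Int_closed:
  assumes Int_closed: "\<And>y z. y \<in> C \<Longrightarrow> z \<in> C \<Longrightarrow> y \<inter> z \<in> C"
    and "finite F" "F \<noteq> {}" "F \<subseteq> C"
  shows "\<Inter>F \<in> C"
  using assms(2-4) by (induction F rule: finite_ne_induct) (auto intro: Int_closed)

lemma MI_mem_finite_Inter:
  assumes Int_closed: "\<And>y z. y \<in> C \<Longrightarrow> z \<in> C \<Longrightarrow> y \<inter> z \<in> C"
    and "finite F" "F \<noteq> {}" "F \<subseteq> C" and "x \<in> MI C" "x = \<Inter>F"
  shows "x \<in> F"
  using assms(2-4,6)
proof (induction F rule: finite_ne_induct)
  case (singleton a)
  then show ?case by simp
next
  case (insert a F)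
  have "\<Inter>F \<in> C"
    using Inter_mem_if_Int_closed[OF Int_closed] insert.hyps insert.prems by blast
  moreover have "a \<in> C" and "x = a \<inter> \<Inter>F"
    using insert.prems by auto
  ultimately have "x = a \<or> x = \<Inter>F"
    using \<open>x \<in> MI C\<close> unfolding MI_def by blast
  then show ?case
    using insert by blast
qed

lemma top_mem_MI:
  assumes "tp \<in> C" and "C \<subseteq> Pow tp"
  shows "tp \<in> MI C"
  using assms unfolding MI_def by blast

lemma dAtoms_subset_MI:
  assumes "C \<subseteq> Pow tp"
  shows "dAtoms C tp \<subseteq> MI C"
  using assms unfolding dAtoms_def MI_def by blast

section \<open>The lattice TSD\<close>

abbreviation SG_interval :: "'a set \<Rightarrow> 'a set \<Rightarrow> 'a set \<Rightarrow> 'a set set" where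
  "SG_interval VI T S \<equiv> {U \<in> SG VI. T \<subseteq> U \<and> U \<subseteq> S}"

text \<open>The union in the definition of \<open>rho_TSD\<close> exhausts \<open>S\<close> iff each \<open>w \<in> S\<close> lies in a member
  of \<open>sh\<close> between \<open>insert w T\<close> and \<open>S\<close>; these sets \<open>insert w T\<close> are exactly the nonempty
  subsets of \<open>S\<close> of size at most \<open>k\<close>.\<close>

lemma mem_rho_TSD_iff:
  assumes "1 \<le> k"
  shows "S \<in> rho_TSD k VI sh \<longleftrightarrow> S \<in> SG VI \<and>
    (\<forall>T. T \<noteq> {} \<longrightarrow> T \<subseteq> S \<longrightarrow> card T \<le> k \<longrightarrow> (\<exists>U\<in>sh. T \<subseteq> U \<and> U \<subseteq> S))"
    (is "_ \<longleftrightarrow> _ \<and> ?covered")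
proof -
  have union_eq_iff: "S = \<Union>{U \<in> sh. T \<subseteq> U \<and> U \<subseteq> S} \<longleftrightarrow>
      (\<forall>w\<in>S. \<exists>U\<in>sh. insert w T \<subseteq> U \<and> U \<subseteq> S)" for T
    by auto
  have "(\<forall>T. T \<subseteq> S \<longrightarrow> card T < k \<longrightarrow> S = \<Union>{U \<in> sh. T \<subseteq> U \<and> U \<subseteq> S}) \<longleftrightarrow> ?covered"
  proof (intro iffI allI impI)
    fix T assume all_unions: "\<forall>T. T \<subseteq> S \<longrightarrow> card T < k \<longrightarrow> S = \<Union>{U \<in> sh. T \<subseteq> U \<and> U \<subseteq> S}"
      and "T \<noteq> {}" "T \<subseteq> S" "card T \<le> k"
    then obtain w where "w \<in> T" by blast
    have "card (T - {w}) < k"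
      using \<open>w \<in> T\<close> \<open>card T \<le> k\<close> assms by (simp add: card_Diff_singleton)
    then have "\<forall>v\<in>S. \<exists>U\<in>sh. insert v (T - {w}) \<subseteq> U \<and> U \<subseteq> S"
      using union_eq_iff[of "T - {w}"] all_unions \<open>T \<subseteq> S\<close> by (meson Diff_subset order_trans)
    then have "\<exists>U\<in>sh. insert w (T - {w}) \<subseteq> U \<and> U \<subseteq> S"
      using \<open>T \<subseteq> S\<close> \<open>w \<in> T\<close> by blast
    then show "\<exists>U\<in>sh. T \<subseteq> U \<and> U \<subseteq> S"
      using \<open>w \<in> T\<close> by (simp add: insert_absorb)
  next
    fix T assume ?covered and "T \<subseteq> S" "card T < k"
    show "S = \<Union>{U \<in> sh. T \<subseteq> U \<and> U \<subseteq> S}"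
      unfolding union_eq_iff
    proof
      fix w assume "w \<in> S"
      have "card (insert w T) \<le> k"
        using \<open>card T < k\<close> by (intro card_insert_le_m1) auto
      then show "\<exists>U\<in>sh. insert w T \<subseteq> U \<and> U \<subseteq> S"
        using \<open>?covered\<close> \<open>w \<in> S\<close> \<open>T \<subseteq> S\<close> by (meson insert_not_empty insert_subset)
    qed
  qed
  then show ?thesis
    unfolding rho_TSD_def mem_Collect_eq by (simp only:)
qed

lemma rho_TSD_subset_SG: "rho_TSD k VI sh \<subseteq> SG VI"
  unfolding rho_TSD_def by (rule Collect_restrict)

lemma rho_TSD_coverE:
  assumes "1 \<le> k" and "S \<in> rho_TSD k VI sh" and "T \<noteq> {}" "T \<subseteq> S" "card T \<le> k"
  obtains U where "U \<in> sh" "T \<subseteq> U" "U \<subseteq> S"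
proof -
  have "\<forall>T. T \<noteq> {} \<longrightarrow> T \<subseteq> S \<longrightarrow> card T \<le> k \<longrightarrow> (\<exists>U\<in>sh. T \<subseteq> U \<and> U \<subseteq> S)"
    using mem_rho_TSD_iff[OF assms(1)] assms(2) by (rule iffD1[THEN conjunct2])
  then show ?thesis
    using assms(3-5) that by meson
qed

lemma rho_TSD_increasing:
  assumes "1 \<le> k" and "sh \<subseteq> SG VI"
  shows "sh \<subseteq> rho_TSD k VI sh"
proof
  fix S assume "S \<in> sh"
  moreover have "S \<in> SG VI"
    using \<open>S \<in> sh\<close> assms(2) by blast
  ultimately show "S \<in> rho_TSD k VI sh"
    unfolding mem_rho_TSD_iff[OF assms(1)] by blast
qed

lemma rho_TSD_idem:
  assumes "1 \<le> k"
  shows "rho_TSD k VI (rho_TSD k VI sh) = rho_TSD k VI sh"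
proof
  show "rho_TSD k VI (rho_TSD k VI sh) \<subseteq> rho_TSD k VI sh"
  proof
    fix S assume S: "S \<in> rho_TSD k VI (rho_TSD k VI sh)"
    have "\<exists>V\<in>sh. T \<subseteq> V \<and> V \<subseteq> S" if T: "T \<noteq> {}" "T \<subseteq> S" "card T \<le> k" for T
    proof -
      obtain U where "U \<in> rho_TSD k VI sh" "T \<subseteq> U" "U \<subseteq> S"
        using rho_TSD_coverE[OF assms S T] .
      moreover obtain V where "V \<in> sh" "T \<subseteq> V" "V \<subseteq> U"
        using rho_TSD_coverE[OF assms calculation(1) T(1) calculation(2) T(3)] .
      ultimately show ?thesis
        by blast
    qed
    moreover have "S \<in> SG VI"
      using S rho_TSD_subset_SG by blast
    ultimately show "S \<in> rho_TSD k VI sh"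
      unfolding mem_rho_TSD_iff[OF assms] by blast
  qed
  show "rho_TSD k VI sh \<subseteq> rho_TSD k VI (rho_TSD k VI sh)"
    by (rule rho_TSD_increasing[OF assms rho_TSD_subset_SG])
qed

lemma mem_TSD_iff:
  assumes "1 \<le> k"
  shows "x \<in> TSD k VI \<longleftrightarrow> x \<subseteq> SG VI \<and>
    (\<forall>S \<in> SG VI - x. \<exists>T. T \<noteq> {} \<and> T \<subseteq> S \<and> card T \<le> k \<and> (\<forall>U\<in>x. \<not> (T \<subseteq> U \<and> U \<subseteq> S)))"
    (is "_ \<longleftrightarrow> x \<subseteq> SG VI \<and> ?separated")
proof
  assume "x \<in> TSD k VI"
  then obtain sh where x: "x = rho_TSD k VI sh"
    unfolding TSD_def by blast
  show "x \<subseteq> SG VI \<and> ?separated"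
  proof (intro conjI ballI)
    show "x \<subseteq> SG VI"
      unfolding x by (rule rho_TSD_subset_SG)
    fix S assume S: "S \<in> SG VI - x"
    then have "S \<notin> rho_TSD k VI x"
      unfolding x rho_TSD_idem[OF assms] by simp
    then have "\<not> (S \<in> SG VI \<and> (\<forall>T. T \<noteq> {} \<longrightarrow> T \<subseteq> S \<longrightarrow> card T \<le> k \<longrightarrow> (\<exists>U\<in>x. T \<subseteq> U \<and> U \<subseteq> S)))"
      unfolding mem_rho_TSD_iff[OF assms] .
    then show "\<exists>T. T \<noteq> {} \<and> T \<subseteq> S \<and> card T \<le> k \<and> (\<forall>U\<in>x. \<not> (T \<subseteq> U \<and> U \<subseteq> S))"
      using S by (meson DiffD1)
  qed
next
  assume closed: "x \<subseteq> SG VI \<and> ?separated"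
  have "rho_TSD k VI x \<subseteq> x"
  proof
    fix S assume S: "S \<in> rho_TSD k VI x"
    show "S \<in> x"
    proof (rule ccontr)
      assume "S \<notin> x"
      then have "S \<in> SG VI - x"
        using S rho_TSD_subset_SG by blast
      with conjunct2[OF closed]
      have "\<exists>T. T \<noteq> {} \<and> T \<subseteq> S \<and> card T \<le> k \<and> (\<forall>U\<in>x. \<not> (T \<subseteq> U \<and> U \<subseteq> S))"
        by (rule bspec)
      then obtain T where T: "T \<noteq> {}" "T \<subseteq> S" "card T \<le> k" "\<forall>U\<in>x. \<not> (T \<subseteq> U \<and> U \<subseteq> S)"
        by blast
      obtain U where "U \<in> x" "T \<subseteq> U" "U \<subseteq> S"
        using rho_TSD_coverE[OF assms S T(1-3)] .
      then show False
        using T(4) by blast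
    qed
  qed
  then have "x = rho_TSD k VI x"
    by (rule subset_antisym[OF rho_TSD_increasing[OF assms conjunct1[OF closed]]])
  moreover have "x \<in> SH VI"
    using closed unfolding SH_def by simp
  ultimately show "x \<in> TSD k VI"
    unfolding TSD_def by (rule image_eqI)
qed

lemma TSD_subset_SG:
  assumes "1 \<le> k" and "x \<in> TSD k VI"
  shows "x \<subseteq> SG VI"
  using assms mem_TSD_iff by blast

lemma TSD_separatedE:
  assumes "1 \<le> k" and "x \<in> TSD k VI" and "S \<in> SG VI" "S \<notin> x"
  obtains T where "T \<noteq> {}" "T \<subseteq> S" "card T \<le> k" "\<forall>U\<in>x. \<not> (T \<subseteq> U \<and> U \<subseteq> S)"
proof -
  have "S \<in> SG VI - x"
    using assms(3,4) by blast
  with conjunct2[OF assms(2)[unfolded mem_TSD_iff[OF assms(1)]]]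
  have "\<exists>T. T \<noteq> {} \<and> T \<subseteq> S \<and> card T \<le> k \<and> (\<forall>U\<in>x. \<not> (T \<subseteq> U \<and> U \<subseteq> S))"
    by (rule bspec)
  then show ?thesis
    using that by blast
qed

lemma SG_mem_TSD:
  assumes "1 \<le> k"
  shows "SG VI \<in> TSD k VI"
  unfolding mem_TSD_iff[OF assms] by simp

lemma TSD_Int:
  assumes "1 \<le> k" and "x \<in> TSD k VI" "y \<in> TSD k VI"
  shows "x \<inter> y \<in> TSD k VI"
  unfolding mem_TSD_iff[OF assms(1)]
proof (intro conjI ballI)
  show "x \<inter> y \<subseteq> SG VI"
    using TSD_subset_SG[OF assms(1,2)] by blast
  fix S assume S: "S \<in> SG VI - x \<inter> y"
  show "\<exists>T. T \<noteq> {} \<and> T \<subseteq> S \<and> card T \<le> k \<and> (\<forall>U\<in>x \<inter> y. \<not> (T \<subseteq> U \<and> U \<subseteq> S))"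
  proof (cases "S \<in> x")
    case True
    then have "S \<notin> y"
      using S by blast
    with TSD_separatedE[OF assms(1,3)] S show ?thesis
      by (metis DiffD1 IntD2)
  next
    case False
    with TSD_separatedE[OF assms(1,2)] S show ?thesis
      by (metis DiffD1 IntD1)
  qed
qed

lemma Diff_SG_interval_mem_TSD:
  assumes "1 \<le> k" and "T \<noteq> {}" "card T \<le> k"
  shows "SG VI - SG_interval VI T S \<in> TSD k VI"
  unfolding mem_TSD_iff[OF assms(1)]
proof (intro conjI ballI)
  fix R assume "R \<in> SG VI - (SG VI - SG_interval VI T S)"
  then have "T \<subseteq> R" "R \<subseteq> S"
    by auto
  then have "\<forall>U\<in>SG VI - SG_interval VI T S. \<not> (T \<subseteq> U \<and> U \<subseteq> R)"
    by blast
  then show "\<exists>T'. T' \<noteq> {} \<and> T' \<subseteq> R \<and> card T' \<le> k \<and>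
      (\<forall>U\<in>SG VI - SG_interval VI T S. \<not> (T' \<subseteq> U \<and> U \<subseteq> R))"
    using assms(2,3) \<open>T \<subseteq> R\<close> by blast
qed blast

lemma Diff_singleton_mem_TSD:
  assumes "1 \<le> k" and "S \<in> SG VI" "card S \<le> k"
  shows "SG VI - {S} \<in> TSD k VI"
proof -
  have "SG VI - {S} = SG VI - SG_interval VI S S"
    using assms(2) by blast
  moreover have "S \<noteq> {}"
    using assms(2) unfolding SG_def by blast
  ultimately show ?thesis
    using Diff_SG_interval_mem_TSD[OF assms(1) _ assms(3)] by simp
qed

lemma dAtoms_TSD:
  assumes "1 \<le> k"
  shows "dAtoms (TSD k VI) (SG VI) = {SG VI - {S} | S. S \<in> SG VI \<and> card S \<le> k}"
proof (intro subset_antisym subsetI)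
  fix x assume "x \<in> dAtoms (TSD k VI) (SG VI)"
  then have x: "x \<in> TSD k VI" "x \<noteq> SG VI"
    and maximal: "\<And>y. y \<in> TSD k VI \<Longrightarrow> x \<subseteq> y \<Longrightarrow> y \<noteq> SG VI \<Longrightarrow> x = y"
    unfolding dAtoms_def by auto
  then obtain S where S: "S \<in> SG VI" "S \<notin> x"
    using TSD_subset_SG[OF assms] by blast
  obtain T where T: "T \<noteq> {}" "T \<subseteq> S" "card T \<le> k" "\<forall>U\<in>x. \<not> (T \<subseteq> U \<and> U \<subseteq> S)"
    using TSD_separatedE[OF assms x(1) S] .
  have "T \<in> SG VI"
    using T(1,2) \<open>S \<in> SG VI\<close> unfolding SG_def by blast
  moreover have "x \<subseteq> SG VI - {T}"
    using TSD_subset_SG[OF assms x(1)] T(2,4) by blast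
  ultimately have "x = SG VI - {T}"
    using maximal[OF Diff_singleton_mem_TSD[OF assms _ T(3)]] by blast
  then show "x \<in> {SG VI - {S} | S. S \<in> SG VI \<and> card S \<le> k}"
    using \<open>T \<in> SG VI\<close> T(3) by blast
next
  fix x assume "x \<in> {SG VI - {S} | S. S \<in> SG VI \<and> card S \<le> k}"
  then obtain S where S: "S \<in> SG VI" "card S \<le> k" "x = SG VI - {S}"
    by blast
  then show "x \<in> dAtoms (TSD k VI) (SG VI)"
    unfolding dAtoms_def using Diff_singleton_mem_TSD[OF assms S(1,2)] TSD_subset_SG[OF assms]
    by blast
qed

lemma TSD_separated_by_dAtoms_or_Mk:
  assumes "finite VI" "1 \<le> k" and x: "x \<in> TSD k VI" and S: "S \<in> SG VI" "S \<notin> x"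
  shows "\<exists>B \<in> dAtoms (TSD k VI) (SG VI) \<union> Mk k VI. x \<subseteq> B \<and> S \<notin> B"
proof (cases "card S \<le> k")
  case True
  then have "SG VI - {S} \<in> dAtoms (TSD k VI) (SG VI)"
    using dAtoms_TSD[OF assms(2)] S(1) by blast
  moreover have "x \<subseteq> SG VI - {S}"
    using TSD_subset_SG[OF assms(2) x] S(2) by blast
  ultimately show ?thesis
    by blast
next
  case False
  obtain T0 where T0: "T0 \<noteq> {}" "T0 \<subseteq> S" "card T0 \<le> k" "\<forall>U\<in>x. \<not> (T0 \<subseteq> U \<and> U \<subseteq> S)"
    using TSD_separatedE[OF assms(2) x S] .
  have "finite S"
    using S(1) assms(1) unfolding SG_def by (auto intro: finite_subset)
  moreover have "k \<le> card S"
    using False by linarith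
  \<comment> \<open>Enlarging \<open>T0\<close> to \<open>T\<close> shrinks the interval, which \<open>x\<close> therefore still avoids.\<close>
  ultimately obtain T where T: "T0 \<subseteq> T" "T \<subseteq> S" "card T = k"
    using exists_subset_between[OF T0(3) _ T0(2)] by blast
  have "T \<in> SG VI"
    using T0(1) T(1,2) S(1) unfolding SG_def by blast
  moreover have "T \<subset> S"
    using T(2,3) False by auto
  ultimately have "SG VI - SG_interval VI T S \<in> Mk k VI"
    unfolding Mk_def using S(1) T(3) by blast
  moreover have "x \<subseteq> SG VI - SG_interval VI T S"
    using TSD_subset_SG[OF assms(2) x] T0(4) T(1) by blast
  moreover have "S \<notin> SG VI - SG_interval VI T S"
    using S(1) T(2) by blast
  ultimately show ?thesis
    by blast
qed

lemma Diff_SG_interval_MI: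
  assumes "finite VI" and S: "S \<in> SG VI" and T: "T \<noteq> {}" "T \<subseteq> S" "card T = k"
  shows "SG VI - SG_interval VI T S \<in> MI (TSD k VI)"
proof -
  let ?x = "SG VI - SG_interval VI T S"
  have "finite S"
    using S assms(1) unfolding SG_def by (auto intro: finite_subset)
  then have "1 \<le> k"
    using T by (metis One_nat_def Suc_leI card_gt_0_iff finite_subset)
  have above: "S \<in> y" if y: "y \<in> TSD k VI" "?x \<subset> y" for y
  proof (rule ccontr)
    assume "S \<notin> y"
    obtain T0 where T0: "T0 \<noteq> {}" "T0 \<subseteq> S" "card T0 \<le> k" "\<forall>U\<in>y. \<not> (T0 \<subseteq> U \<and> U \<subseteq> S)"
      using TSD_separatedE[OF \<open>1 \<le> k\<close> y(1) S \<open>S \<notin> y\<close>] .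
    show False
    proof (cases "T \<subseteq> T0")
      case True
      then have "T0 = T"
        using card_seteq[OF finite_subset[OF T0(2) \<open>finite S\<close>]] T0(3) T(3) by (metis order_refl)
      obtain R where "R \<in> y" "R \<in> SG_interval VI T S"
        using y(2) TSD_subset_SG[OF \<open>1 \<le> k\<close> y(1)] by blast
      then show False
        using T0(4) unfolding \<open>T0 = T\<close> by blast
    next
      case False
      moreover have "T0 \<in> SG VI"
        using T0(1,2) S unfolding SG_def by blast
      ultimately have "T0 \<in> y"
        using y(2) by blast
      then show False
        using T0(2,4) by blast
    qed
  qed
  show ?thesis
    unfolding MI_def
  proof (intro CollectI conjI ballI impI)
    show "?x \<in> TSD k VI"
      using Diff_SG_interval_mem_TSD[OF \<open>1 \<le> k\<close> T(1)] T(3) by simp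
    fix y z assume yz: "y \<in> TSD k VI" "z \<in> TSD k VI" "?x = y \<inter> z"
    show "?x = y \<or> ?x = z"
    proof (rule ccontr)
      assume "\<not> (?x = y \<or> ?x = z)"
      then have "?x \<subset> y" "?x \<subset> z"
        using yz(3) by auto
      then have "S \<in> y \<inter> z"
        using above yz(1,2) by blast
      moreover have "S \<notin> ?x"
        using S T(2) by blast
      ultimately show False
        using yz(3) by simp
    qed
  qed
qed

lemma Mk_subset_MI:
  assumes "finite VI"
  shows "Mk k VI \<subseteq> MI (TSD k VI)"
proof
  fix x assume "x \<in> Mk k VI"
  then obtain T S where "T \<in> SG VI" "S \<in> SG VI" "T \<subset> S" "card T = k"
    and x: "x = SG VI - SG_interval VI T S"
    unfolding Mk_def by blast
  moreover have "T \<noteq> {}"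
    using \<open>T \<in> SG VI\<close> unfolding SG_def by blast
  ultimately show "x \<in> MI (TSD k VI)"
    using Diff_SG_interval_MI[OF assms] by blast
qed

lemma MI_TSD_subset:
  assumes "finite VI" "1 \<le> k"
  shows "MI (TSD k VI) \<subseteq> insert (SG VI) (dAtoms (TSD k VI) (SG VI) \<union> Mk k VI)"
proof
  fix x assume x: "x \<in> MI (TSD k VI)"
  show "x \<in> insert (SG VI) (dAtoms (TSD k VI) (SG VI) \<union> Mk k VI)"
  proof (cases "x = SG VI")
    case False
    define F where "F = {B \<in> dAtoms (TSD k VI) (SG VI) \<union> Mk k VI. x \<subseteq> B}"
    have "x \<in> TSD k VI"
      using x unfolding MI_def by blast
    have F_sub: "F \<subseteq> TSD k VI"
      using Mk_subset_MI[OF assms(1)] unfolding F_def dAtoms_def MI_def by blast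
    have separating: "\<exists>B\<in>F. R \<notin> B" if "R \<in> SG VI" "R \<notin> x" for R
      using TSD_separated_by_dAtoms_or_Mk[OF assms \<open>x \<in> TSD k VI\<close> that] unfolding F_def by blast
    have "finite (SG VI)"
      using assms(1) unfolding SG_def by simp
    then have "finite F"
      using F_sub TSD_subset_SG[OF assms(2)] by (meson Pow_iff finite_Pow_iff finite_subset subsetI)
    moreover have "F \<noteq> {}"
      using separating False TSD_subset_SG[OF assms(2) \<open>x \<in> TSD k VI\<close>] by blast
    moreover have "x = \<Inter>F"
    proof
      show "x \<subseteq> \<Inter>F"
        unfolding F_def by blast
      show "\<Inter>F \<subseteq> x"
        using separating \<open>F \<noteq> {}\<close> F_sub TSD_subset_SG[OF assms(2)] by blast
    qed
    ultimately have "x \<in> F"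
      using MI_mem_finite_Inter[OF TSD_Int[OF assms(2)] _ _ F_sub x] by blast
    then show ?thesis
      unfolding F_def by blast
  qed simp
qed

theorem theorem4p3:
  fixes VI :: "'a set" and n k :: nat
  assumes "finite VI" and "card VI = n" and "1 \<le> k" and "k \<le> n"
  shows "MI (TSD k VI) = {SG VI} \<union> dAtoms (TSD k VI) (SG VI) \<union> Mk k VI
     \<and> dAtoms (TSD k VI) (SG VI) = {SG VI - {S} | S. S \<in> SG VI \<and> card S \<le> k}"
proof
  have "TSD k VI \<subseteq> Pow (SG VI)"
    using TSD_subset_SG[OF assms(3)] by blast
  then have "SG VI \<in> MI (TSD k VI)" and "dAtoms (TSD k VI) (SG VI) \<subseteq> MI (TSD k VI)"
    by (rule top_mem_MI[OF SG_mem_TSD[OF assms(3)]], rule dAtoms_subset_MI)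
  with Mk_subset_MI[OF assms(1)] MI_TSD_subset[OF assms(1,3)]
  show "MI (TSD k VI) = {SG VI} \<union> dAtoms (TSD k VI) (SG VI) \<union> Mk k VI"
    by (intro subset_antisym) auto
  show "dAtoms (TSD k VI) (SG VI) = {SG VI - {S} | S. S \<in> SG VI \<and> card S \<le> k}"
    by (rule dAtoms_TSD[OF assms(3)])
qed

end
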